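(* For all $n\ge 4$, $|F_n(321,1423,3124)|=F_n+2$, where $F_n$ is the $n$-th Fibonacci number with $F_0=F_1=1$ and $F_n=F_{n-1}+F_{n-2}$ for $n\ge 2$.
   Context: A permutation $\pi$ avoids a classical pattern $p\in S_k$ if no subsequence of $\pi$ of length $k$ is order-isomorphic to $p$. A Fishburn permutation is a permutation $\pi=\pi_1\cdots\pi_n$ of $[n]$ for which there are no indices $i<j$ with $\pi_j<\pi_i<\pi_{i+1}$ and $\pi_i=\pi_j+1$. $F_n(\sigma_1,\dots,\sigma_k)$ denotes the set of Fishburn permutations of length $n$ avoiding each of the classical patterns $\sigma_1,\dots,\sigma_k$. *)

theory Defs
  imports Main
begin

(* Permutations of [n] are represented as lists of naturals (positions 0-indexed). *)
definition is_perm :: "nat \<Rightarrow> nat list \<Rightarrow> bool" where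
  "is_perm n p \<longleftrightarrow> length p = n \<and> distinct p \<and> set p = {1..n}"

definition contains :: "nat list \<Rightarrow> nat list \<Rightarrow> bool" where
  "contains p q \<longleftrightarrow> (\<exists>idx :: nat \<Rightarrow> nat.
      (\<forall>a b. a < b \<and> b < length q \<longrightarrow> idx a < idx b) \<and>
      (\<forall>a < length q. idx a < length p) \<and>
      (\<forall>a < length q. \<forall>b < length q. (p ! idx a < p ! idx b \<longleftrightarrow> q ! a < q ! b)))"

definition avoids :: "nat list \<Rightarrow> nat list \<Rightarrow> bool" where
  "avoids p q \<longleftrightarrow> \<not> contains p q"

definition fishburn :: "nat list \<Rightarrow> bool" where
  "fishburn p \<longleftrightarrow> \<not> (\<exists>i j. i < j \<and> j < length p \<and> i + 1 < length p \<and>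
      p ! j < p ! i \<and> p ! i < p ! (i + 1) \<and> p ! i = p ! j + 1)"

definition Fish :: "nat \<Rightarrow> nat list list \<Rightarrow> nat list set" where
  "Fish n pats = {p. is_perm n p \<and> fishburn p \<and> (\<forall>q \<in> set pats. avoids p q)}"

fun F :: "nat \<Rightarrow> nat" where
  "F 0 = 1"
| "F (Suc 0) = 1"
| "F (Suc (Suc n)) = F (Suc n) + F n"

end

theory Submission
  imports Defs
begin

text \<open>
  A Fishburn permutation avoiding 321 and 312 is a direct sum of blocks 1 and 21: if its first
  i entries are exactly 1..i, the next entry is i+1, or it is i+2 immediately followed by i+1,
  since otherwise a 312, a 321 or the forbidden Fishburn pattern appears. There are F n such
  permutations, and they avoid 1423 and 3124 because both patterns contain 312.
  If a permutation in the class contains 312, the top of every 312 must be the first entry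
  (else a 321, 1423 or Fishburn pattern arises), the second entry is then 1, and the position of
  2 leaves only n 1 2 ... (n-1) and 3 1 4 5 ... n 2. These account for the two extra elements.
\<close>

lemma contains_321_iff:
  "contains p [3,2,1] \<longleftrightarrow> (\<exists>i j k. i < j \<and> j < k \<and> k < length p \<and> p!k < p!j \<and> p!j < p!i)"
  unfolding contains_def
  apply (intro iffI; elim exE conjE)
  subgoal for idx
    by (intro exI[of _ "idx 0"] exI[of _ "idx 1"] exI[of _ "idx 2"]) (simp add: numeral_eq_Suc)
  subgoal for i j k by (intro exI[of _ "nth [i,j,k]"]) (auto simp: less_Suc_eq numeral_eq_Suc)
  done

lemma contains_312_iff:
  "contains p [3,1,2] \<longleftrightarrow> (\<exists>i j k. i < j \<and> j < k \<and> k < length p \<and> p!j < p!k \<and> p!k < p!i)"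
  unfolding contains_def
  apply (intro iffI; elim exE conjE)
  subgoal for idx
    by (intro exI[of _ "idx 0"] exI[of _ "idx 1"] exI[of _ "idx 2"]) (simp add: numeral_eq_Suc)
  subgoal for i j k by (intro exI[of _ "nth [i,j,k]"]) (auto simp: less_Suc_eq numeral_eq_Suc)
  done

lemma contains_1423_iff:
  "contains p [1,4,2,3] \<longleftrightarrow>
    (\<exists>i j k l. i < j \<and> j < k \<and> k < l \<and> l < length p \<and> p!i < p!k \<and> p!k < p!l \<and> p!l < p!j)"
  unfolding contains_def
  apply (intro iffI; elim exE conjE)
  subgoal for idx
    by (intro exI[of _ "idx 0"] exI[of _ "idx 1"] exI[of _ "idx 2"] exI[of _ "idx 3"])
      (simp add: numeral_eq_Suc)
  subgoal for i j k l by (intro exI[of _ "nth [i,j,k,l]"]) (auto simp: less_Suc_eq numeral_eq_Suc)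
  done

lemma contains_3124_iff:
  "contains p [3,1,2,4] \<longleftrightarrow>
    (\<exists>i j k l. i < j \<and> j < k \<and> k < l \<and> l < length p \<and> p!j < p!k \<and> p!k < p!i \<and> p!i < p!l)"
  unfolding contains_def
  apply (intro iffI; elim exE conjE)
  subgoal for idx
    by (intro exI[of _ "idx 0"] exI[of _ "idx 1"] exI[of _ "idx 2"] exI[of _ "idx 3"])
      (simp add: numeral_eq_Suc)
  subgoal for i j k l by (intro exI[of _ "nth [i,j,k,l]"]) (auto simp: less_Suc_eq numeral_eq_Suc)
  done

lemma not_contains_312_if_displacement_le_2:
  assumes "\<And>t. t < length p \<Longrightarrow> t \<le> p!t \<and> p!t \<le> t + 2"
  shows "\<not> contains p [3,1,2]"
proof
  assume "contains p [3,1,2]"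
  then obtain i j k where "i < j" "j < k" "k < length p" "p!k < p!i"
    unfolding contains_312_iff by blast
  then show False using assms[of i] assms[of k] by simp
qed

lemma not_contains_321_if_displacement_le_2:
  assumes "\<And>t. t < length p \<Longrightarrow> t \<le> p!t \<and> p!t \<le> t + 2"
  shows "\<not> contains p [3,2,1]"
proof
  assume "contains p [3,2,1]"
  then obtain i j k where "i < j" "j < k" "k < length p" "p!k < p!i"
    unfolding contains_321_iff by (blast dest: less_trans)
  then show False using assms[of i] assms[of k] by simp
qed

lemma contains_312_if_contains_1423: "contains p [1,4,2,3] \<Longrightarrow> contains p [3,1,2]"
  unfolding contains_1423_iff contains_312_iff by (metis less_trans)

lemma contains_312_if_contains_3124: "contains p [3,1,2,4] \<Longrightarrow> contains p [3,1,2]"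
  unfolding contains_3124_iff contains_312_iff by (metis less_trans)

lemma strict_mono_on_eq_shift:
  fixes f :: "nat \<Rightarrow> nat"
  assumes mono: "strict_mono_on {lo..<hi} f" and range: "f ` {lo..<hi} \<subseteq> {c..<c + (hi - lo)}"
    and t: "t \<in> {lo..<hi}"
  shows "f t = c + (t - lo)"
proof -
  let ?xs = "map f [lo..<hi]"
  have sorted: "sorted_wrt (<) ?xs"
    using mono
    by (auto simp: sorted_wrt_map strict_mono_on_def intro: sorted_wrt_mono_rel[OF _ sorted_wrt_upt])
  have "card (set ?xs) = hi - lo"
    using sorted distinct_card[of ?xs] by (simp add: strict_sorted_iff del: set_map)
  then have "set ?xs = {c..<c + (hi - lo)}"
    using range by (intro card_subset_eq) auto
  then have xs: "?xs = [c..<c + (hi - lo)]"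
    using sorted by (intro strict_sorted_equal) auto
  have "f t = ?xs ! (t - lo)"
    using t by (auto simp: nth_map_upt)
  also have "\<dots> = c + (t - lo)"
    unfolding xs using t by (intro nth_upt) auto
  finally show ?thesis .
qed

text \<open>
  Layered permutations with layers of length at most 2, i.e. direct sums of 1 and 21: every entry
  is a fixed point or one half of a swapped pair of adjacent values. Positions are 0-based and
  values 1-based, so a fixed point at position i has value i + 1.
\<close>

definition short_layer_at :: "nat list \<Rightarrow> nat \<Rightarrow> bool" where
  "short_layer_at p i \<longleftrightarrow>
     p!i = i + 1 \<or>
     (i + 1 < length p \<and> p!i = i + 2 \<and> p!(i+1) = i + 1) \<or>
     (0 < i \<and> p!i = i \<and> p!(i-1) = i + 1)"

definition short_layered :: "nat \<Rightarrow> nat list set" where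
  "short_layered n = {p. length p = n \<and> (\<forall>i<n. short_layer_at p i)}"

lemma short_layer_at_bounds: "short_layer_at p i \<Longrightarrow> i \<le> p!i \<and> p!i \<le> i + 2"
  by (auto simp: short_layer_at_def)

lemma short_layer_at_append: "short_layer_at q i \<Longrightarrow> i < length q \<Longrightarrow> short_layer_at (q @ s) i"
  by (auto simp: short_layer_at_def nth_append)

lemma short_layered_0: "short_layered 0 = {[]}"
  by (auto simp: short_layered_def)

lemma short_layered_1: "short_layered 1 = {[1]}"
  by (auto simp: short_layered_def short_layer_at_def length_Suc_conv)

lemma short_layered_snoc:
  assumes "q \<in> short_layered n" shows "q @ [n+1] \<in> short_layered (n+1)"
proof -
  have "short_layer_at (q @ [n+1]) i" if "i < n + 1" for i
  proof (cases "i < n")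
    case True then show ?thesis using assms by (simp add: short_layered_def short_layer_at_append)
  next
    case False
    then have "i = n" using that by simp
    then show ?thesis using assms by (simp add: short_layered_def short_layer_at_def nth_append)
  qed
  then show ?thesis using assms by (simp add: short_layered_def)
qed

lemma short_layered_snoc_swap:
  assumes "q \<in> short_layered n" shows "q @ [n+2, n+1] \<in> short_layered (n+2)"
proof -
  have "short_layer_at (q @ [n+2, n+1]) i" if "i < n + 2" for i
  proof (cases "i < n")
    case True then show ?thesis using assms by (simp add: short_layered_def short_layer_at_append)
  next
    case False
    then have "i = n \<or> i = n + 1" using that by auto
    then show ?thesis using assms by (auto simp: short_layered_def short_layer_at_def nth_append)
  qed
  then show ?thesis using assms by (simp add: short_layered_def)
qed

lemma take_short_layered:
  assumes "p \<in> short_layered n" "m \<le> n" and closed: "\<And>i. i < m \<Longrightarrow> p!i \<le> m"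
  shows "take m p \<in> short_layered m"
proof -
  have "short_layer_at (take m p) i" if "i < m" for i
  proof -
    have "short_layer_at p i" using assms that by (simp add: short_layered_def)
    moreover have "i + 1 < m" if "p!i = i + 2" using closed[of i] \<open>i < m\<close> that by simp
    ultimately show ?thesis using \<open>i < m\<close> \<open>m \<le> n\<close> assms(1)
      by (auto simp: short_layer_at_def short_layered_def)
  qed
  then show ?thesis using assms by (simp add: short_layered_def)
qed

lemma short_layered_Suc_Suc:
  "short_layered (n+2) =
     (\<lambda>q. q @ [n+2]) ` short_layered (n+1) \<union> (\<lambda>q. q @ [n+2, n+1]) ` short_layered n"
proof (intro equalityI subsetI)
  fix p assume p: "p \<in> short_layered (n+2)"
  then have len: "length p = n + 2" and layer: "\<And>i. i < n + 2 \<Longrightarrow> short_layer_at p i"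
    by (auto simp: short_layered_def)
  have bound: "p!i \<le> n + 1" if "i < n" for i
    using short_layer_at_bounds[OF layer, of i] that by simp
  from layer[of "n+1"] len consider "p!(n+1) = n + 2" | "p!(n+1) = n + 1" "p!n = n + 2"
    by (auto simp: short_layer_at_def)
  then show "p \<in> (\<lambda>q. q @ [n+2]) ` short_layered (n+1) \<union> (\<lambda>q. q @ [n+2, n+1]) ` short_layered n"
  proof cases
    case 1
    have "p!n \<le> n + 1" using layer[of n] 1 by (auto simp: short_layer_at_def)
    then have "take (n+1) p \<in> short_layered (n+1)"
      using p bound by (intro take_short_layered) (auto simp: less_Suc_eq)
    moreover have "p = take (n+1) p @ [n+2]"
      using len 1 take_Suc_conv_app_nth[of "n+1" p] by simp
    ultimately show ?thesis by blast
  next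
    case 2
    have "p!i \<le> n" if "i < n" for i
      using layer[of i] bound[of i] 2 that by (cases "i + 1 = n") (auto simp: short_layer_at_def)
    then have "take n p \<in> short_layered n"
      using p by (intro take_short_layered) auto
    moreover have "p = take n p @ [n+2, n+1]"
      using len 2 take_Suc_conv_app_nth[of "n+1" p] take_Suc_conv_app_nth[of n p] by simp
    ultimately show ?thesis by blast
  qed
next
  fix p
  assume "p \<in> (\<lambda>q. q @ [n+2]) ` short_layered (n+1) \<union> (\<lambda>q. q @ [n+2, n+1]) ` short_layered n"
  then show "p \<in> short_layered (n+2)"
    using short_layered_snoc[of _ "n+1"] short_layered_snoc_swap by auto
qed

lemma first_le_2_if_short_layered: "p \<in> short_layered n \<Longrightarrow> 0 < n \<Longrightarrow> p!0 \<le> 2"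
  using short_layer_at_bounds[of p 0] by (simp add: short_layered_def)

lemma finite_short_layered: "finite (short_layered n)"
proof (rule finite_subset)
  show "short_layered n \<subseteq> {p. set p \<subseteq> {0..n+2} \<and> length p = n}"
    by (force simp: short_layered_def in_set_conv_nth dest: short_layer_at_bounds)
qed (simp add: finite_lists_length_eq)

lemma card_short_layered: "card (short_layered n) = F n"
proof (induction n rule: F.induct)
  case (3 n)
  have "card (short_layered (n+2)) = card (short_layered (n+1)) + card (short_layered n)"
    unfolding short_layered_Suc_Suc
  proof (subst card_Un_disjoint)
    show "(\<lambda>q. q @ [n+2]) ` short_layered (n+1) \<inter> (\<lambda>q. q @ [n+2, n+1]) ` short_layered n = {}"
      by auto
  qed (simp_all add: finite_short_layered card_image inj_on_def)
  then show ?case using 3 by simp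
qed (simp_all add: short_layered_0 short_layered_1[simplified])

lemma short_layered_is_perm: "p \<in> short_layered n \<Longrightarrow> is_perm n p"
proof (induction n arbitrary: p rule: F.induct)
  case (3 n)
  then show ?case
    using short_layered_Suc_Suc[of n] by (auto simp: is_perm_def)
qed (auto simp: short_layered_0 short_layered_1[simplified] is_perm_def)

lemma fishburn_if_short_layered:
  assumes "p \<in> short_layered n" shows "fishburn p"
  unfolding fishburn_def
proof clarify
  fix i j assume ij: "i < j" "j < length p" "p!j < p!i" "p!i < p!(i+1)" "p!i = p!j + 1"
  have "short_layer_at p i" "short_layer_at p j" using assms ij by (auto simp: short_layered_def)
  then show False using ij unfolding short_layer_at_def by auto
qed

lemma short_layered_subset_Fish: "short_layered n \<subseteq> Fish n [[3,2,1], [1,4,2,3], [3,1,2,4]]"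
proof
  fix p assume p: "p \<in> short_layered n"
  then have near: "\<And>t. t < length p \<Longrightarrow> t \<le> p!t \<and> p!t \<le> t + 2"
    by (intro short_layer_at_bounds) (simp add: short_layered_def)
  show "p \<in> Fish n [[3,2,1], [1,4,2,3], [3,1,2,4]]"
    using short_layered_is_perm[OF p] fishburn_if_short_layered[OF p]
      not_contains_321_if_displacement_le_2[OF near] not_contains_312_if_displacement_le_2[OF near]
      contains_312_if_contains_1423 contains_312_if_contains_3124
    by (auto simp: Fish_def avoids_def)
qed

definition cycle_perm :: "nat \<Rightarrow> nat list" where
  "cycle_perm n = n # [1..<n]"

definition perm_3142 :: "nat \<Rightarrow> nat list" where
  "perm_3142 n = [3, 1] @ [4..<n+1] @ [2]"

lemma length_cycle_perm: "1 \<le> n \<Longrightarrow> length (cycle_perm n) = n"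
  by (simp add: cycle_perm_def)

lemma nth_cycle_perm: "t < n \<Longrightarrow> cycle_perm n ! t = (if t = 0 then n else t)"
  by (cases t) (auto simp: cycle_perm_def)

lemma length_perm_3142: "3 \<le> n \<Longrightarrow> length (perm_3142 n) = n"
  by (simp add: perm_3142_def; linarith)

lemma nth_perm_3142:
  "3 \<le> n \<Longrightarrow> t < n \<Longrightarrow>
     perm_3142 n ! t = (if t = 0 then 3 else if t = 1 then 1 else if t = n - 1 then 2 else t + 2)"
  by (auto simp: perm_3142_def nth_append nth_Cons')

lemma cycle_perm_in_Fish:
  assumes "1 \<le> n" shows "cycle_perm n \<in> Fish n [[3,2,1], [1,4,2,3], [3,1,2,4]]"
proof -
  have len: "length (cycle_perm n) = n" using assms by (rule length_cycle_perm)
  have "is_perm n (cycle_perm n)" using assms by (auto simp: is_perm_def cycle_perm_def)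
  moreover have "fishburn (cycle_perm n)"
    unfolding fishburn_def len by (auto simp: nth_cycle_perm)
  moreover have "\<not> contains (cycle_perm n) [3,2,1]"
    unfolding contains_321_iff len by (auto simp: nth_cycle_perm)
  moreover have "\<not> contains (cycle_perm n) [1,4,2,3]"
    unfolding contains_1423_iff len by (auto simp: nth_cycle_perm)
  moreover have "\<not> contains (cycle_perm n) [3,1,2,4]"
    unfolding contains_3124_iff len by (auto simp: nth_cycle_perm)
  ultimately show ?thesis by (simp add: Fish_def avoids_def)
qed

lemma perm_3142_in_Fish:
  assumes "3 \<le> n" shows "perm_3142 n \<in> Fish n [[3,2,1], [1,4,2,3], [3,1,2,4]]"
proof -
  have len: "length (perm_3142 n) = n" using assms by (rule length_perm_3142)
  have "is_perm n (perm_3142 n)" using assms by (auto simp: is_perm_def perm_3142_def)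
  moreover have "fishburn (perm_3142 n)"
    unfolding fishburn_def len using assms by (auto simp: nth_perm_3142 split: if_splits)
  moreover have "\<not> contains (perm_3142 n) [3,2,1]"
    unfolding contains_321_iff len using assms by (auto simp: nth_perm_3142 split: if_splits)
  moreover have "\<not> contains (perm_3142 n) [1,4,2,3]"
    unfolding contains_1423_iff len using assms by (auto simp: nth_perm_3142 split: if_splits)
  moreover have "\<not> contains (perm_3142 n) [3,1,2,4]"
    unfolding contains_3124_iff len using assms by (auto simp: nth_perm_3142 split: if_splits)
  ultimately show ?thesis by (simp add: Fish_def avoids_def)
qed

locale fishburn_321_avoider =
  fixes p :: "nat list" and n :: nat
  assumes perm: "is_perm n p"
    and fishburn: "fishburn p"
    and avoids_321: "\<not> contains p [3,2,1]"
begin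

lemma length_p: "length p = n"
  using perm by (simp add: is_perm_def)

lemma nth_inject: "s < n \<Longrightarrow> t < n \<Longrightarrow> p!s = p!t \<Longrightarrow> s = t"
  using perm by (simp add: is_perm_def nth_eq_iff_index_eq)

lemma nth_bounds: "t < n \<Longrightarrow> 1 \<le> p!t \<and> p!t \<le> n"
  using perm nth_mem[of t p] by (auto simp: is_perm_def)

lemma value_position:
  assumes "1 \<le> v" "v \<le> n"
  obtains t where "t < n" "p!t = v"
  using perm assms by (metis atLeastAtMost_iff in_set_conv_nth is_perm_def)

lemma no_321: "i < j \<Longrightarrow> j < k \<Longrightarrow> k < n \<Longrightarrow> p!k < p!j \<Longrightarrow> p!j < p!i \<Longrightarrow> False"
  using avoids_321 length_p unfolding contains_321_iff by blast

lemma no_fishburn_pattern: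
  "i < j \<Longrightarrow> j < n \<Longrightarrow> i + 1 < n \<Longrightarrow> p!i = p!j + 1 \<Longrightarrow> p!i < p!(i+1) \<Longrightarrow> False"
  using fishburn length_p unfolding fishburn_def by force

lemma increasing_below:
  assumes "i < s" "s < t" "t < n" "p!s < p!i" "p!t < p!i"
  shows "p!s < p!t"
proof -
  have "p!s \<noteq> p!t" using nth_inject[of s t] assms by auto
  moreover have "\<not> p!t < p!s" using no_321[of i s t] assms by blast
  ultimately show ?thesis by simp
qed

lemma increasing_above:
  assumes "s < t" "t < k" "k < n" "p!k < p!s" "p!k < p!t"
  shows "p!s < p!t"
proof -
  have "p!s \<noteq> p!t" using nth_inject[of s t] assms by auto
  moreover have "\<not> p!t < p!s" using no_321[of s t k] assms by blast
  ultimately show ?thesis by simp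
qed

definition prefix_closed :: "nat \<Rightarrow> bool" where
  "prefix_closed i \<longleftrightarrow> (\<forall>t<n. t < i \<longleftrightarrow> p!t \<le> i)"

lemma prefix_closed_step:
  assumes no_312: "\<not> contains p [3,1,2]" and "i < n" and closed: "prefix_closed i"
  shows "p!i = i + 1 \<and> prefix_closed (i+1) \<or>
         i + 1 < n \<and> p!i = i + 2 \<and> p!(i+1) = i + 1 \<and> prefix_closed (i+2)"
proof -
  have no_312': False if "a < b" "b < c" "c < n" "p!b < p!c" "p!c < p!a" for a b c
    using no_312 that length_p unfolding contains_312_iff by blast
  have later: "i \<le> t" if "t < n" "i < p!t" for t
    using closed that by (auto simp: prefix_closed_def)
  obtain j where j: "j < n" "p!j = i + 1" using value_position[of "i+1"] \<open>i < n\<close> by auto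
  have "i \<le> j" using later[of j] j by simp
  show ?thesis
  proof (cases "p!i = i + 1")
    case True
    have "prefix_closed (i+1)"
      unfolding prefix_closed_def
    proof (intro allI impI)
      fix t assume "t < n"
      then show "t < i + 1 \<longleftrightarrow> p!t \<le> i + 1"
        using closed[unfolded prefix_closed_def, rule_format, OF \<open>t < n\<close>]
          nth_inject[OF \<open>t < n\<close> \<open>i < n\<close>] True
        by (cases "t = i") auto
    qed
    then show ?thesis using True by simp
  next
    case False
    have "i < j" using j False \<open>i \<le> j\<close> le_neq_implies_less by blast
    have "p!i \<noteq> i + 1" "\<not> p!i \<le> i" using False closed \<open>i < n\<close> by (auto simp: prefix_closed_def)
    have pi: "p!i = i + 2"
    proof (rule ccontr)
      assume "p!i \<noteq> i + 2"
      then have big: "i + 2 < p!i" using \<open>\<not> p!i \<le> i\<close> False by simp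
      obtain j' where j': "j' < n" "p!j' = i + 2"
        using value_position[of "i+2"] big nth_bounds[OF \<open>i < n\<close>] by auto
      have "i < j'" using later[of j'] j' \<open>p!i \<noteq> i + 2\<close> le_neq_implies_less by fastforce
      have "j \<noteq> j'" using j j' by auto
      then consider "j < j'" | "j' < j" by linarith
      then show False
      proof cases
        case 1 then show False using no_312'[of i j j'] \<open>i < j\<close> j j' big by simp
      next
        case 2 then show False using no_321[of i j' j] \<open>i < j'\<close> j j' big by simp
      qed
    qed
    show ?thesis
    proof (cases "j = i + 1")
      case True
      have "prefix_closed (i+2)"
        unfolding prefix_closed_def
      proof (intro allI impI)
        fix t assume "t < n"
        then show "t < i + 2 \<longleftrightarrow> p!t \<le> i + 2"
          using closed[unfolded prefix_closed_def, rule_format, OF \<open>t < n\<close>]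
            nth_inject[OF \<open>t < n\<close> \<open>i < n\<close>] nth_inject[OF \<open>t < n\<close> \<open>j < n\<close>] pi j True
          by (cases "t = i"; cases "t = i + 1") (auto simp: le_Suc_eq)
      qed
      then show ?thesis using pi j True by simp
    next
      case False
      then have "i + 1 < j" using \<open>i < j\<close> by simp
      then have "i + 1 < n" using j by simp
      have "p!(i+1) \<noteq> i + 1" "p!(i+1) \<noteq> i + 2" "\<not> p!(i+1) \<le> i"
        using nth_inject[of "i+1" j] nth_inject[of "i+1" i] j pi \<open>i + 1 < j\<close> \<open>i + 1 < n\<close>
          closed[unfolded prefix_closed_def, rule_format, OF \<open>i + 1 < n\<close>]
        by auto
      then show ?thesis
        using no_fishburn_pattern[of i j] \<open>i < j\<close> j \<open>i + 1 < n\<close> pi by simp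
    qed
  qed
qed

lemma short_layered_if_avoids_312:
  assumes "\<not> contains p [3,1,2]"
  shows "p \<in> short_layered n"
proof -
  have "\<exists>i. m \<le> i \<and> i \<le> n \<and> prefix_closed i \<and> (\<forall>t<i. short_layer_at p t)" if "m \<le> n" for m
    using that
  proof (induction m)
    case 0
    have "prefix_closed 0" using nth_bounds by (fastforce simp: prefix_closed_def)
    then show ?case by blast
  next
    case (Suc m)
    then obtain i where i: "m \<le> i" "i \<le> n" "prefix_closed i" "\<forall>t<i. short_layer_at p t" by auto
    show ?case
    proof (cases "m < i")
      case True then show ?thesis using i by (intro exI[of _ i]) simp
    next
      case False
      then have "i = m" "i < n" using i Suc.prems by auto
      from prefix_closed_step[OF assms \<open>i < n\<close> \<open>prefix_closed i\<close>] show ?thesis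
      proof (elim disjE conjE)
        assume "p!i = i + 1" "prefix_closed (i+1)"
        then show ?thesis using i \<open>i = m\<close> \<open>i < n\<close>
          by (intro exI[of _ "i+1"]) (auto simp: short_layer_at_def less_Suc_eq)
      next
        assume "i + 1 < n" "p!i = i + 2" "p!(i+1) = i + 1" "prefix_closed (i+2)"
        then show ?thesis using i \<open>i = m\<close> length_p
          by (intro exI[of _ "i+2"]) (auto simp: short_layer_at_def less_Suc_eq)
      qed
    qed
  qed
  from this[of n] show ?thesis using length_p by (auto simp: short_layered_def)
qed

end

locale fishburn_avoider = fishburn_321_avoider +
  assumes avoids_1423: "\<not> contains p [1,4,2,3]"
    and avoids_3124: "\<not> contains p [3,1,2,4]"
begin

lemma no_1423:
  "i < j \<Longrightarrow> j < k \<Longrightarrow> k < l \<Longrightarrow> l < n \<Longrightarrow> p!i < p!k \<Longrightarrow> p!k < p!l \<Longrightarrow> p!l < p!j \<Longrightarrow> False"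
  using avoids_1423 length_p unfolding contains_1423_iff by blast

lemma no_3124:
  "i < j \<Longrightarrow> j < k \<Longrightarrow> k < l \<Longrightarrow> l < n \<Longrightarrow> p!j < p!k \<Longrightarrow> p!k < p!i \<Longrightarrow> p!i < p!l \<Longrightarrow> False"
  using avoids_3124 length_p unfolding contains_3124_iff by blast

lemma top_of_312_is_first:
  assumes ijk: "i < j" "j < k" "k < n" "p!j < p!k" "p!k < p!i"
  shows "i = 0"
proof (rule ccontr)
  assume "i \<noteq> 0"
  have before_i: "p!j < p!t \<and> p!t < p!i" if "t < i" for t
  proof
    have "p!t \<noteq> p!j" using nth_inject[of t j] that ijk by auto
    moreover have "\<not> p!t < p!j" using no_1423[of t i j k] that ijk by auto
    ultimately show "p!j < p!t" by simp
    then show "p!t < p!i"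
      using increasing_above[of t i j] that ijk by simp
  qed
  have first_smallest: "p!0 < p!t" if "0 < t" "t \<le> i" for t
  proof (cases "t = i")
    case True then show ?thesis using before_i \<open>i \<noteq> 0\<close> by simp
  next
    case False
    then show ?thesis using increasing_above[of 0 t j] before_i[of 0] before_i[of t] that ijk by simp
  qed
  have "1 \<le> p!0 - 1" "p!0 - 1 \<le> n"
    using before_i[of 0] nth_bounds[of j] nth_bounds[of 0] \<open>i \<noteq> 0\<close> ijk by auto
  then obtain y where y: "y < n" "p!y = p!0 - 1" by (rule value_position)
  have "\<not> y \<le> i" using first_smallest[of y] y before_i[of 0] \<open>i \<noteq> 0\<close> by (cases "y = 0") auto
  then show False
    using no_fishburn_pattern[of 0 y] first_smallest[of 1] y before_i[of 0] \<open>i \<noteq> 0\<close> ijk by simp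
qed

lemma first_ge_3_if_contains_312:
  assumes "contains p [3,1,2]" shows "3 \<le> p!0" "3 \<le> n"
proof -
  obtain i j k where ijk: "i < j" "j < k" "k < n" "p!j < p!k" "p!k < p!i"
    using assms length_p unfolding contains_312_iff by blast
  then show "3 \<le> p!0" using top_of_312_is_first[OF ijk] nth_bounds[of j] by simp
  show "3 \<le> n" using ijk by simp
qed

lemma second_eq_1:
  assumes "contains p [3,1,2]" shows "p!1 = 1"
proof -
  have first: "3 \<le> p!0" and "3 \<le> n" using first_ge_3_if_contains_312[OF assms] by auto
  have "1 \<le> p!0 - 1" "p!0 - 1 \<le> n" using first nth_bounds[of 0] \<open>3 \<le> n\<close> by auto
  then obtain y where y: "y < n" "p!y = p!0 - 1" by (rule value_position)
  have "p!1 \<noteq> p!0" using nth_inject[of 1 0] \<open>3 \<le> n\<close> by auto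
  moreover have "\<not> p!0 < p!1"
    using no_fishburn_pattern[of 0 y] y first \<open>3 \<le> n\<close> by (cases "y = 0") auto
  ultimately have "p!1 < p!0" by simp
  obtain z where z: "z < n" "p!z = 1" using value_position[of 1] \<open>3 \<le> n\<close> by auto
  have "z = 1"
    using increasing_below[of 0 1 z] z first \<open>p!1 < p!0\<close> nth_bounds[of 1] \<open>3 \<le> n\<close>
    by (cases "z = 0"; cases "z = 1") auto
  then show ?thesis using z by simp
qed

lemma eq_cycle_perm:
  assumes "contains p [3,1,2]" and third: "p!2 = 2"
  shows "p = cycle_perm n"
proof -
  have first: "3 \<le> p!0" and "3 \<le> n" using first_ge_3_if_contains_312[OF assms(1)] by auto
  have second: "p!1 = 1" using assms(1) by (rule second_eq_1)
  have below_first: "p!t < p!0" if "1 \<le> t" "t < n" for t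
  proof -
    have "p!t \<noteq> p!0" using nth_inject[of t 0] that by auto
    moreover have "\<not> p!0 < p!t"
      using no_3124[of 0 1 2 t] second third first that by (cases "t = 1"; cases "t = 2") auto
    ultimately show ?thesis by simp
  qed
  have "strict_mono_on {1..<n} (\<lambda>t. p!t)"
    using increasing_below[of 0] below_first by (simp add: strict_mono_on_def)
  moreover have "(\<lambda>t. p!t) ` {1..<n} \<subseteq> {1..<1 + (n - 1)}"
    using below_first nth_bounds[of 0] nth_bounds \<open>3 \<le> n\<close> by fastforce
  ultimately have middle: "p!t = t" if "1 \<le> t" "t < n" for t
    using strict_mono_on_eq_shift[of 1 n "\<lambda>t. p!t" 1 t] that by simp
  have "n - 1 < p!0"
    using below_first[of "n - 1"] middle[of "n - 1"] \<open>3 \<le> n\<close> by simp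
  then have "p!0 = n" using nth_bounds[of 0] \<open>3 \<le> n\<close> by simp
  show ?thesis
    by (rule nth_equalityI)
      (use middle \<open>p!0 = n\<close> \<open>3 \<le> n\<close> in \<open>auto simp: length_p length_cycle_perm nth_cycle_perm\<close>)
qed

lemma first_eq_3_and_last_eq_2:
  assumes "contains p [3,1,2]" and third: "p!2 \<noteq> 2"
  shows "p!0 = 3" "p!(n-1) = 2" "4 \<le> n"
proof -
  have first: "3 \<le> p!0" and "3 \<le> n" using first_ge_3_if_contains_312[OF assms(1)] by auto
  have second: "p!1 = 1" using assms(1) by (rule second_eq_1)
  obtain y where y: "y < n" "p!y = 2" using value_position[of 2] \<open>3 \<le> n\<close> by auto
  have "y \<noteq> 0" using y first by (intro notI) simp
  moreover have "y \<noteq> 1" using y second by (intro notI) simp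
  moreover have "y \<noteq> 2" using y third by (intro notI) simp
  ultimately have "2 < y" by linarith
  have "p!2 \<noteq> p!0" "p!2 \<noteq> 1" using nth_inject[of 2 0] nth_inject[of 2 1] second \<open>3 \<le> n\<close> by auto
  moreover have "\<not> p!2 < p!0"
    using increasing_below[of 0 2 y] y \<open>2 < y\<close> first nth_bounds[of 2] \<open>p!2 \<noteq> 1\<close> by auto
  ultimately have third_big: "p!0 < p!2" by simp
  show first_3: "p!0 = 3"
  proof (rule ccontr)
    assume "p!0 \<noteq> 3"
    then have "3 < p!0" using first by simp
    obtain z where z: "z < n" "p!z = 3" using value_position[of 3] \<open>3 \<le> n\<close> by auto
    have "z \<noteq> 0" using z \<open>p!0 \<noteq> 3\<close> by (intro notI) simp
    have "z \<noteq> y" using z y by (intro notI) simp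
    moreover have "\<not> z < y"
      using increasing_below[of 0 z y] z y \<open>3 < p!0\<close> \<open>z \<noteq> 0\<close> by auto
    ultimately have "y < z" by simp
    then show False
      using no_1423[of 1 2 y z] z y second third_big \<open>3 < p!0\<close> \<open>2 < y\<close> by simp
  qed
  have "y = n - 1"
  proof (rule ccontr)
    assume "y \<noteq> n - 1"
    then have "y + 1 < n" using y by simp
    have "p!(y+1) \<noteq> 1" using nth_inject[of "y+1" 1] \<open>y + 1 < n\<close> \<open>2 < y\<close> second by auto
    moreover have "p!(y+1) \<noteq> 2" using nth_inject[of "y+1" y] \<open>y + 1 < n\<close> y by auto
    moreover have "p!(y+1) \<noteq> 3" using nth_inject[of "y+1" 0] \<open>y + 1 < n\<close> first_3 by auto
    ultimately have "3 < p!(y+1)" using nth_bounds[of "y+1"] \<open>y + 1 < n\<close> by auto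
    then show False
      using no_3124[of 0 1 y "y+1"] \<open>y + 1 < n\<close> \<open>2 < y\<close> y second first_3 by simp
  qed
  then show "p!(n-1) = 2" "4 \<le> n" using y \<open>2 < y\<close> by auto
qed

lemma eq_perm_3142:
  assumes "contains p [3,1,2]" and "p!2 \<noteq> 2"
  shows "p = perm_3142 n"
proof -
  have first: "p!0 = 3" and last: "p!(n-1) = 2" and "4 \<le> n"
    using first_eq_3_and_last_eq_2[OF assms] by auto
  have second: "p!1 = 1" using assms(1) by (rule second_eq_1)
  have middle_range: "4 \<le> p!t \<and> p!t \<le> n" if "2 \<le> t" "t < n - 1" for t
  proof -
    have "t < n" using that by simp
    then have "p!t \<noteq> 1" "p!t \<noteq> 2" "p!t \<noteq> 3"
      using nth_inject[of t 1] nth_inject[of t "n-1"] nth_inject[of t 0] that first second last by auto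
    then show ?thesis using nth_bounds[OF \<open>t < n\<close>] by auto
  qed
  have "strict_mono_on {2..<n-1} (\<lambda>t. p!t)"
  proof (rule strict_mono_onI)
    fix r s assume "r \<in> {2..<n-1}" "s \<in> {2..<n-1}" "r < s"
    then show "p!r < p!s"
      using increasing_above[of r s "n-1"] middle_range[of r] middle_range[of s] last by simp
  qed
  moreover have "(\<lambda>t. p!t) ` {2..<n-1} \<subseteq> {4..<4 + (n - 1 - 2)}"
    using middle_range \<open>4 \<le> n\<close> by fastforce
  ultimately have middle: "p!t = t + 2" if "2 \<le> t" "t < n - 1" for t
    using strict_mono_on_eq_shift[of 2 "n-1" "\<lambda>t. p!t" 4 t] that by simp
  show ?thesis
  proof (rule nth_equalityI)
    show "length p = length (perm_3142 n)" using \<open>4 \<le> n\<close> by (simp add: length_p length_perm_3142)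
    fix t assume "t < length p"
    then show "p!t = perm_3142 n ! t"
      using middle[of t] first second last \<open>4 \<le> n\<close> nth_perm_3142[of n t] length_p
      by (simp split: if_splits)
  qed
qed

lemma short_layered_or_special:
  "p \<in> short_layered n \<or> p = cycle_perm n \<or> p = perm_3142 n"
proof (cases "contains p [3,1,2]")
  case True
  then show ?thesis using eq_cycle_perm eq_perm_3142 by blast
next
  case False
  then show ?thesis using short_layered_if_avoids_312 by blast
qed

end

lemma Fish_eq_short_layered_special:
  assumes "4 \<le> n"
  shows "Fish n [[3,2,1], [1,4,2,3], [3,1,2,4]] = short_layered n \<union> {cycle_perm n, perm_3142 n}"
proof
  show "Fish n [[3,2,1], [1,4,2,3], [3,1,2,4]] \<subseteq> short_layered n \<union> {cycle_perm n, perm_3142 n}"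
  proof
    fix p assume "p \<in> Fish n [[3,2,1], [1,4,2,3], [3,1,2,4]]"
    then interpret fishburn_avoider p n
      by unfold_locales (auto simp: Fish_def avoids_def)
    show "p \<in> short_layered n \<union> {cycle_perm n, perm_3142 n}"
      using short_layered_or_special by blast
  qed
  show "short_layered n \<union> {cycle_perm n, perm_3142 n} \<subseteq> Fish n [[3,2,1], [1,4,2,3], [3,1,2,4]]"
    using short_layered_subset_Fish cycle_perm_in_Fish perm_3142_in_Fish assms by auto
qed

theorem mainTheorem13:
  fixes n :: nat
  assumes "n \<ge> 4"
  shows "card (Fish n [[3,2,1], [1,4,2,3], [3,1,2,4]]) = F n + 2"
proof -
  have "cycle_perm n \<notin> short_layered n"
    using first_le_2_if_short_layered[of "cycle_perm n" n] nth_cycle_perm[of 0 n] assms by auto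
  moreover have "perm_3142 n \<notin> short_layered n"
    using first_le_2_if_short_layered[of "perm_3142 n" n] nth_perm_3142[of n 0] assms by auto
  moreover have "cycle_perm n \<noteq> perm_3142 n"  \<comment> \<open>both are 312 when n = 3\<close>
    using nth_cycle_perm[of 0 n] nth_perm_3142[of n 0] assms by auto
  ultimately show ?thesis
    using Fish_eq_short_layered_special[OF assms] finite_short_layered card_short_layered by simp
qed

end
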